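(* Let $K$ be an infinite field, $m\geq 1$, $n\geq 2$, and let $p(x_1,\ldots,x_m)\in K\langle x_1,\ldots,x_m\rangle$ be a noncommutative polynomial with zero constant term and $\mathrm{ord}(p)=r$, where $1<r<n-1$. Let $A'=(a'_{ij})\in T_n(K)^{(r-1)}$ be such that $a'_{s,r+s}\neq 0$ for all $s$ with $1\leq s$ and $r+s\leq n$. Then $A'\in p(T_n(K))$.
   Context: $T_n(K)$ denotes the algebra of $n\times n$ upper triangular matrices over $K$; $T_n(K)^{(t)}$ denotes the set of upper triangular matrices whose $(i,j)$ entries vanish whenever $j-i\leq t$. $p(T_n(K))=\{p(a_1,\ldots,a_m):a_i\in T_n(K)\}$. The order $\mathrm{ord}(p)$ is the least positive integer $r$ with $p(T_r(K))=\{0\}$ but $p(T_{r+1}(K))\neq\{0\}$ (with $T_1(K)=K$). *)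

theory Defs
  imports Main "HOL-Library.Poly_Mapping"
begin

text \<open>n x n matrices over K are represented as functions nat => nat => K; indices are
  0-based (entry (i,j) of the paper is entry (i-1,j-1) here) and entries outside
  {0..<n} x {0..<n} are required to be 0.\<close>

type_synonym 'a sqmat = "nat \<Rightarrow> nat \<Rightarrow> 'a"

definition upper_tri :: "nat \<Rightarrow> 'a::zero sqmat set" where
  "upper_tri n = {A. \<forall>i j. (n \<le> i \<or> n \<le> j \<or> j < i) \<longrightarrow> A i j = 0}"

definition upper_tri_strict :: "nat \<Rightarrow> nat \<Rightarrow> 'a::zero sqmat set" where
  "upper_tri_strict n t = {A \<in> upper_tri n. \<forall>i j. int j - int i \<le> int t \<longrightarrow> A i j = 0}"

definition mat_mul :: "nat \<Rightarrow> 'a::semiring_0 sqmat \<Rightarrow> 'a sqmat \<Rightarrow> 'a sqmat" where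
  "mat_mul n A B = (\<lambda>i j. if i < n \<and> j < n then (\<Sum>k<n. A i k * B k j) else 0)"

definition mat_one :: "nat \<Rightarrow> 'a::{zero,one} sqmat" where
  "mat_one n = (\<lambda>i j. if i < n \<and> i = j then 1 else 0)"

definition mat_smult :: "'a::times \<Rightarrow> 'a sqmat \<Rightarrow> 'a sqmat" where
  "mat_smult c A = (\<lambda>i j. c * A i j)"

text \<open>Noncommutative polynomials K<x_0, x_1, ...>: finitely supported coefficient functions
  on words (lists of variable indices). The paper's variable x_k is our index k-1.\<close>
type_synonym 'a ncpoly = "nat list \<Rightarrow>\<^sub>0 'a"

definition ncpoly_vars_in :: "nat \<Rightarrow> 'a::zero ncpoly \<Rightarrow> bool" where
  "ncpoly_vars_in m p \<longleftrightarrow> (\<forall>w \<in> Poly_Mapping.keys p. \<forall>x \<in> set w. x < m)"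

definition word_eval :: "nat \<Rightarrow> (nat \<Rightarrow> 'a::semiring_1 sqmat) \<Rightarrow> nat list \<Rightarrow> 'a sqmat" where
  "word_eval n a w = foldr (\<lambda>x M. mat_mul n (a x) M) w (mat_one n)"

definition ncpoly_eval :: "nat \<Rightarrow> 'a::comm_semiring_1 ncpoly \<Rightarrow> (nat \<Rightarrow> 'a sqmat) \<Rightarrow> 'a sqmat" where
  "ncpoly_eval n p a = (\<lambda>i j. \<Sum>w\<in>Poly_Mapping.keys p. Poly_Mapping.lookup p w * word_eval n a w i j)"

definition image_on_T :: "nat \<Rightarrow> nat \<Rightarrow> 'a::comm_semiring_1 ncpoly \<Rightarrow> 'a sqmat set" where
  "image_on_T m n p = {ncpoly_eval n p a | a. \<forall>k<m. a k \<in> upper_tri n}"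

definition vanishes_on_T :: "nat \<Rightarrow> nat \<Rightarrow> 'a::comm_semiring_1 ncpoly \<Rightarrow> bool" where
  "vanishes_on_T m n p \<longleftrightarrow> image_on_T m n p = {\<lambda>i j. 0}"

definition has_order :: "nat \<Rightarrow> 'a::comm_semiring_1 ncpoly \<Rightarrow> nat \<Rightarrow> bool" where
  "has_order m p r \<longleftrightarrow>
     (let P = (\<lambda>s. vanishes_on_T m s p \<and> \<not> vanishes_on_T m (s + 1) p)
      in r \<ge> 1 \<and> P r \<and> (\<forall>s. 1 \<le> s \<and> s < r \<longrightarrow> \<not> P s))"

end

theory Submission
  imports Defs "HOL-Computational_Algebra.Polynomial"
begin

text \<open>Since p vanishes on T_r, the entry (i, j) of p(a) depends only on the diagonal block of
  the a_k from i to j, so p(a) lies in T_n^(r-1) for every tuple a; since p does not vanish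
  on T_(r+1), the corner entry of some p(b) on T_(r+1) is nonzero, and placing b on the
  block at i makes entry (i, i+r) nonzero. Over an infinite field, one tuple a makes all
  entries on the r-th superdiagonal nonzero at once (each entry is a polynomial along a
  line of tuples). Then X = p(a) and A' are both in T_n^(r-1) with nonzero r-th
  superdiagonal, and solving g X = A' g entrywise gives an upper triangular invertible g.
  Hence A' = g p(a) g^(-1) = p(g a g^(-1)).\<close>

lemma sum_lessThan_subset:
  assumes "S \<subseteq> {..<(n::nat)}" "\<And>k. k < n \<Longrightarrow> k \<notin> S \<Longrightarrow> f k = 0"
  shows "(\<Sum>k<n. f k) = (\<Sum>k\<in>S. f k)"
  using assms by (intro sum.mono_neutral_right) auto

lemma sum_lessThan_window:
  fixes f :: "nat \<Rightarrow> 'b::comm_monoid_add"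
  assumes "i + t < n" "\<And>k. k < n \<Longrightarrow> k < i + s \<or> i + t < k \<Longrightarrow> f k = 0"
  shows "(\<Sum>k<n. f k) = (\<Sum>q\<in>{s..t}. f (i + q))"
proof -
  have "(\<Sum>k<n. f k) = (\<Sum>k\<in>{i+s..i+t}. f k)"
    by (rule sum_lessThan_subset) (use assms in auto)
  also have "\<dots> = (\<Sum>q\<in>{s..t}. f (i + q))"
    using sum.reindex[of "\<lambda>q. i + q" "{s..t}" f] by (simp add: add.commute)
  finally show ?thesis .
qed

definition upper_tri_band :: "nat \<Rightarrow> nat \<Rightarrow> 'a::zero sqmat set" where
  "upper_tri_band n r = {X \<in> upper_tri n.
     (\<forall>i j. j < i + r \<longrightarrow> X i j = 0) \<and> (\<forall>i. i + r < n \<longrightarrow> X i (i + r) \<noteq> 0)}"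

lemma upper_triD: "A \<in> upper_tri n \<Longrightarrow> n \<le> i \<or> n \<le> j \<or> j < i \<Longrightarrow> A i j = 0"
  by (auto simp: upper_tri_def)

lemma mat_mul_outside: "\<not> (i < n \<and> j < n) \<Longrightarrow> mat_mul n A B i j = 0"
  by (auto simp: mat_mul_def)

lemma mat_mul_upper_tri:
  assumes "A \<in> upper_tri n" "B \<in> upper_tri n"
  shows "mat_mul n A B \<in> upper_tri n"
proof -
  have "mat_mul n A B i j = 0" if "j < i" for i j
  proof -
    have "A i k * B k j = 0" for k
      using that upper_triD[OF assms(1), of i k] upper_triD[OF assms(2), of k j]
      by (cases "k < i") auto
    thus ?thesis by (simp add: mat_mul_def)
  qed
  thus ?thesis by (auto simp: upper_tri_def mat_mul_def)
qed

lemma mat_one_upper_tri: "mat_one n \<in> upper_tri n"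
  by (auto simp: upper_tri_def mat_one_def)

lemma mat_mul_assoc: "mat_mul n A (mat_mul n B C) = mat_mul n (mat_mul n A B) C"
proof (intro ext)
  fix i j
  show "mat_mul n A (mat_mul n B C) i j = mat_mul n (mat_mul n A B) C i j"
  proof (cases "i < n \<and> j < n")
    case True
    have "(\<Sum>k<n. A i k * mat_mul n B C k j) = (\<Sum>k<n. \<Sum>l<n. A i k * B k l * C l j)"
      using True by (simp add: mat_mul_def sum_distrib_left mult.assoc)
    also have "\<dots> = (\<Sum>l<n. \<Sum>k<n. A i k * B k l * C l j)"
      by (rule sum.swap)
    also have "\<dots> = (\<Sum>l<n. mat_mul n A B i l * C l j)"
      using True by (simp add: mat_mul_def sum_distrib_right)
    finally show ?thesis using True by (simp add: mat_mul_def)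
  qed (simp add: mat_mul_outside)
qed

lemma mat_mul_one_right:
  fixes g :: "'a::semiring_1 sqmat"
  shows "mat_mul n g (mat_one n) = (\<lambda>i j. if i < n \<and> j < n then g i j else 0)"
proof (intro ext)
  fix i j
  have "(\<Sum>k<n. g i k * mat_one n k j) = (\<Sum>k<n. if k = j then g i k else 0)"
    by (rule sum.cong) (auto simp: mat_one_def)
  thus "mat_mul n g (mat_one n) i j = (if i < n \<and> j < n then g i j else 0)"
    by (simp add: mat_mul_def)
qed

lemma mat_mul_one_left:
  fixes g :: "'a::semiring_1 sqmat"
  shows "mat_mul n (mat_one n) g = (\<lambda>i j. if i < n \<and> j < n then g i j else 0)"
proof (intro ext)
  fix i j
  have "(\<Sum>k<n. mat_one n i k * g k j) = (\<Sum>k<n. if k = i then g k j else 0)"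
    by (rule sum.cong) (auto simp: mat_one_def)
  thus "mat_mul n (mat_one n) g i j = (if i < n \<and> j < n then g i j else 0)"
    by (simp add: mat_mul_def)
qed

subsection \<open>Evaluation of noncommutative polynomials\<close>

lemma word_eval_Nil: "word_eval n a [] = mat_one n"
  by (simp add: word_eval_def)

lemma word_eval_Cons: "word_eval n a (x # w) = mat_mul n (a x) (word_eval n a w)"
  by (simp add: word_eval_def)

lemma word_eval_upper_tri:
  "\<forall>x\<in>set w. a x \<in> upper_tri n \<Longrightarrow> word_eval n a w \<in> upper_tri n"
  by (induction w) (auto simp: word_eval_Nil word_eval_Cons mat_one_upper_tri mat_mul_upper_tri)

lemma ncpoly_eval_upper_tri:
  assumes "ncpoly_vars_in m p" "\<forall>k<m. a k \<in> upper_tri n"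
  shows "ncpoly_eval n p a \<in> upper_tri n"
proof -
  have "word_eval n a w \<in> upper_tri n" if "w \<in> Poly_Mapping.keys p" for w
    using that assms by (intro word_eval_upper_tri) (auto simp: ncpoly_vars_in_def)
  thus ?thesis by (auto simp: upper_tri_def ncpoly_eval_def intro!: sum.neutral)
qed

text \<open>An entry of a product of upper triangular matrices only involves the diagonal block
  spanned by its row and column.\<close>

lemma word_eval_block:
  assumes "\<forall>x\<in>set w. a x \<in> upper_tri n" "\<forall>x\<in>set w. b x \<in> upper_tri N"
    and "i + d < n" "i' + d < N"
    and "\<forall>x\<in>set w. \<forall>s t. s \<le> t \<longrightarrow> t \<le> d \<longrightarrow> a x (i+s) (i+t) = b x (i'+s) (i'+t)"
    and "s \<le> t" "t \<le> d"
  shows "word_eval n a w (i+s) (i+t) = word_eval N b w (i'+s) (i'+t)"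
  using assms
proof (induction w arbitrary: s t)
  case Nil
  then show ?case by (simp add: word_eval_Nil mat_one_def)
next
  case (Cons x w)
  let ?W = "word_eval n a w" and ?V = "word_eval N b w"
  have W: "?W \<in> upper_tri n" "?V \<in> upper_tri N"
    using Cons.prems by (auto intro: word_eval_upper_tri)
  have ax: "a x \<in> upper_tri n" "b x \<in> upper_tri N"
    using Cons.prems by auto
  have "word_eval n a (x # w) (i+s) (i+t) = (\<Sum>k<n. a x (i+s) k * ?W k (i+t))"
    using Cons.prems by (simp add: word_eval_Cons mat_mul_def)
  also have "\<dots> = (\<Sum>q\<in>{s..t}. a x (i+s) (i+q) * ?W (i+q) (i+t))"
    by (rule sum_lessThan_window)
      (use Cons.prems upper_triD[OF ax(1)] upper_triD[OF W(1)] in auto)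
  also have "\<dots> = (\<Sum>q\<in>{s..t}. b x (i'+s) (i'+q) * ?V (i'+q) (i'+t))"
    by (rule sum.cong) (use Cons in auto)
  also have "\<dots> = (\<Sum>k<N. b x (i'+s) k * ?V k (i'+t))"
    by (rule sum_lessThan_window[symmetric])
      (use Cons.prems upper_triD[OF ax(2)] upper_triD[OF W(2)] in auto)
  also have "\<dots> = word_eval N b (x # w) (i'+s) (i'+t)"
    using Cons.prems by (simp add: word_eval_Cons mat_mul_def)
  finally show ?case .
qed

lemma ncpoly_eval_block:
  assumes "ncpoly_vars_in m p" "\<forall>k<m. a k \<in> upper_tri n" "\<forall>k<m. b k \<in> upper_tri N"
    and "i + d < n" "i' + d < N"
    and "\<forall>k<m. \<forall>s t. s \<le> t \<longrightarrow> t \<le> d \<longrightarrow> a k (i+s) (i+t) = b k (i'+s) (i'+t)"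
  shows "ncpoly_eval n p a i (i+d) = ncpoly_eval N p b i' (i'+d)"
  unfolding ncpoly_eval_def
proof (rule sum.cong[OF refl])
  fix w assume "w \<in> Poly_Mapping.keys p"
  hence "\<forall>x\<in>set w. x < m" using assms(1) by (auto simp: ncpoly_vars_in_def)
  hence "word_eval n a w (i+0) (i+d) = word_eval N b w (i'+0) (i'+d)"
    using assms by (intro word_eval_block) auto
  thus "Poly_Mapping.lookup p w * word_eval n a w i (i+d)
      = Poly_Mapping.lookup p w * word_eval N b w i' (i'+d)"
    by simp
qed

lemma mat_mul_ncpoly_eval_left:
  fixes p :: "'a::comm_semiring_1 ncpoly"
  shows "mat_mul n g (ncpoly_eval n p a) =
    (\<lambda>i j. \<Sum>w\<in>Poly_Mapping.keys p. Poly_Mapping.lookup p w * mat_mul n g (word_eval n a w) i j)"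
proof (intro ext)
  fix i j
  show "mat_mul n g (ncpoly_eval n p a) i j =
    (\<Sum>w\<in>Poly_Mapping.keys p. Poly_Mapping.lookup p w * mat_mul n g (word_eval n a w) i j)"
  proof (cases "i < n \<and> j < n")
    case True
    have "mat_mul n g (ncpoly_eval n p a) i j =
      (\<Sum>k<n. \<Sum>w\<in>Poly_Mapping.keys p. g i k * (Poly_Mapping.lookup p w * word_eval n a w k j))"
      using True by (simp add: mat_mul_def ncpoly_eval_def sum_distrib_left)
    also have "\<dots> = (\<Sum>w\<in>Poly_Mapping.keys p. \<Sum>k<n. g i k * (Poly_Mapping.lookup p w * word_eval n a w k j))"
      by (rule sum.swap)
    also have "\<dots> = (\<Sum>w\<in>Poly_Mapping.keys p. Poly_Mapping.lookup p w * mat_mul n g (word_eval n a w) i j)"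
      using True by (simp add: mat_mul_def sum_distrib_left mult.left_commute)
    finally show ?thesis .
  qed (simp add: mat_mul_outside)
qed

lemma mat_mul_ncpoly_eval_right:
  fixes p :: "'a::comm_semiring_1 ncpoly"
  shows "mat_mul n (ncpoly_eval n p a) g =
    (\<lambda>i j. \<Sum>w\<in>Poly_Mapping.keys p. Poly_Mapping.lookup p w * mat_mul n (word_eval n a w) g i j)"
proof (intro ext)
  fix i j
  show "mat_mul n (ncpoly_eval n p a) g i j =
    (\<Sum>w\<in>Poly_Mapping.keys p. Poly_Mapping.lookup p w * mat_mul n (word_eval n a w) g i j)"
  proof (cases "i < n \<and> j < n")
    case True
    have "mat_mul n (ncpoly_eval n p a) g i j =
      (\<Sum>k<n. \<Sum>w\<in>Poly_Mapping.keys p. Poly_Mapping.lookup p w * word_eval n a w i k * g k j)"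
      using True by (simp add: mat_mul_def ncpoly_eval_def sum_distrib_right)
    also have "\<dots> = (\<Sum>w\<in>Poly_Mapping.keys p. \<Sum>k<n. Poly_Mapping.lookup p w * word_eval n a w i k * g k j)"
      by (rule sum.swap)
    also have "\<dots> = (\<Sum>w\<in>Poly_Mapping.keys p. Poly_Mapping.lookup p w * mat_mul n (word_eval n a w) g i j)"
      using True by (simp add: mat_mul_def sum_distrib_left mult.assoc)
    finally show ?thesis .
  qed (simp add: mat_mul_outside)
qed

lemma word_eval_intertwine:
  assumes "\<forall>x\<in>set w. mat_mul n g (a x) = mat_mul n (a' x) g"
  shows "mat_mul n g (word_eval n a w) = mat_mul n (word_eval n a' w) g"
  using assms
proof (induction w)
  case Nil thus ?case by (simp add: word_eval_Nil mat_mul_one_right mat_mul_one_left)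
next
  case (Cons x w)
  have "mat_mul n g (word_eval n a (x # w)) = mat_mul n (mat_mul n g (a x)) (word_eval n a w)"
    by (simp add: word_eval_Cons mat_mul_assoc)
  also have "\<dots> = mat_mul n (a' x) (mat_mul n g (word_eval n a w))"
    using Cons.prems by (simp add: mat_mul_assoc)
  also have "\<dots> = mat_mul n (a' x) (mat_mul n (word_eval n a' w) g)"
    using Cons by simp
  also have "\<dots> = mat_mul n (word_eval n a' (x # w)) g"
    by (simp add: word_eval_Cons mat_mul_assoc)
  finally show ?case .
qed

lemma ncpoly_eval_intertwine:
  fixes p :: "'a::comm_semiring_1 ncpoly"
  assumes "ncpoly_vars_in m p" "\<forall>k<m. mat_mul n g (a k) = mat_mul n (a' k) g"
  shows "mat_mul n g (ncpoly_eval n p a) = mat_mul n (ncpoly_eval n p a') g"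
proof -
  have "mat_mul n g (word_eval n a w) = mat_mul n (word_eval n a' w) g"
    if "w \<in> Poly_Mapping.keys p" for w
    using that assms by (intro word_eval_intertwine) (auto simp: ncpoly_vars_in_def)
  thus ?thesis by (simp add: mat_mul_ncpoly_eval_left mat_mul_ncpoly_eval_right)
qed

subsection \<open>Consequences of the order\<close>

lemma has_orderD:
  assumes "has_order m p r"
  shows "vanishes_on_T m r p" "\<not> vanishes_on_T m (r+1) p"
  using assms unfolding has_order_def Let_def by blast+

lemma has_order_vanishes:
  assumes "has_order m p r" "\<forall>k<m. b k \<in> upper_tri r"
  shows "ncpoly_eval r p b = (\<lambda>i j. 0)"
proof -
  have "ncpoly_eval r p b \<in> image_on_T m r p"
    unfolding image_on_T_def using assms(2) by blast
  thus ?thesis using has_orderD(1)[OF assms(1)] unfolding vanishes_on_T_def by blast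
qed

lemma has_order_nonvanishing:
  fixes p :: "'a::comm_semiring_1 ncpoly"
  assumes "has_order m p r"
  obtains b where "\<forall>k<m. b k \<in> upper_tri (r+1)" "ncpoly_eval (r+1) p b \<noteq> (\<lambda>i j. 0)"
proof -
  have "\<exists>b. (\<forall>k<m. b k \<in> upper_tri (r+1)) \<and> ncpoly_eval (r+1) p b \<noteq> (\<lambda>i j. 0)"
  proof (rule ccontr)
    assume none: "\<not> ?thesis"
    have vanish: "ncpoly_eval (r+1) p b = (\<lambda>i j. 0)" if "\<forall>k<m. b k \<in> upper_tri (r+1)" for b
      using none that by blast
    have zero: "\<forall>k<m. (\<lambda>i j. 0) \<in> upper_tri (r+1)" by (simp add: upper_tri_def)
    have "image_on_T m (r+1) p = {\<lambda>i j. 0}"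
    proof (intro equalityI subsetI)
      fix X :: "'a sqmat" assume "X \<in> image_on_T m (r+1) p"
      thus "X \<in> {\<lambda>i j. 0}" unfolding image_on_T_def using vanish by blast
    next
      fix X :: "'a sqmat" assume "X \<in> {\<lambda>i j. 0}"
      hence "X = ncpoly_eval (r+1) p (\<lambda>k i j. 0)" using vanish[OF zero] by simp
      thus "X \<in> image_on_T m (r+1) p" unfolding image_on_T_def using zero by blast
    qed
    thus False using has_orderD(2)[OF assms] unfolding vanishes_on_T_def by contradiction
  qed
  thus thesis using that by blast
qed

lemma ncpoly_eval_below_superdiag:
  assumes order: "has_order m p r" and vars: "ncpoly_vars_in m p"
    and a: "\<forall>k<m. a k \<in> upper_tri n" and "j < i + r"
  shows "ncpoly_eval n p a i j = 0"
proof (cases "i < n \<and> j < n \<and> i \<le> j")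
  case False
  thus ?thesis by (intro upper_triD[OF ncpoly_eval_upper_tri[OF vars a]]) auto
next
  case True
  define d where "d = j - i"
  have d: "d < r" "j = i + d" using True \<open>j < i + r\<close> by (auto simp: d_def)
  define b where "b = (\<lambda>k u v. if u \<le> v \<and> v \<le> d then a k (i+u) (i+v) else 0)"
  have b: "\<forall>k<m. b k \<in> upper_tri r"
    using d by (auto simp: upper_tri_def b_def)
  have "ncpoly_eval n p a i (i+d) = ncpoly_eval r p b 0 (0+d)"
    by (rule ncpoly_eval_block[OF vars a b]) (use True d in \<open>auto simp: b_def\<close>)
  thus ?thesis using has_order_vanishes[OF order b] d by simp
qed

lemma ncpoly_eval_superdiag_witness:
  assumes order: "has_order m p r" and vars: "ncpoly_vars_in m p" and "i + r < n"
  obtains c where "\<forall>k<m. c k \<in> upper_tri n" "ncpoly_eval n p c i (i+r) \<noteq> 0"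
proof -
  obtain b where b: "\<forall>k<m. b k \<in> upper_tri (r+1)" "ncpoly_eval (r+1) p b \<noteq> (\<lambda>i j. 0)"
    using has_order_nonvanishing[OF order] by blast
  then obtain i0 j0 where nz: "ncpoly_eval (r+1) p b i0 j0 \<noteq> 0" by blast
  have "\<not> (r + 1 \<le> i0 \<or> r + 1 \<le> j0 \<or> j0 < i0)"
    using nz upper_triD[OF ncpoly_eval_upper_tri[OF vars b(1)]] by blast
  moreover have "\<not> j0 < i0 + r"
    using nz ncpoly_eval_below_superdiag[OF order vars b(1)] by blast
  ultimately have "i0 = 0" "j0 = r" by auto
  hence corner: "ncpoly_eval (r+1) p b 0 (0+r) \<noteq> 0" using nz by simp
  define c where "c = (\<lambda>k u v. if i \<le> u \<and> u \<le> v \<and> v \<le> i + r then b k (u - i) (v - i) else 0)"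
  have c: "\<forall>k<m. c k \<in> upper_tri n"
    using \<open>i + r < n\<close> by (auto simp: c_def upper_tri_def)
  have "ncpoly_eval n p c i (i+r) = ncpoly_eval (r+1) p b 0 (0+r)"
    by (rule ncpoly_eval_block[OF vars c b(1)]) (use \<open>i + r < n\<close> in \<open>auto simp: c_def\<close>)
  thus thesis using that c corner by simp
qed

subsection \<open>Generic tuples over an infinite field\<close>

definition poly_fun :: "('a::comm_ring_1 \<Rightarrow> 'a) \<Rightarrow> bool" where
  "poly_fun h \<longleftrightarrow> (\<exists>q. \<forall>t. h t = poly q t)"

lemma poly_fun_const: "poly_fun (\<lambda>t. c)"
  unfolding poly_fun_def by (intro exI[of _ "[:c:]"]) simp

lemma poly_fun_add: "poly_fun f \<Longrightarrow> poly_fun g \<Longrightarrow> poly_fun (\<lambda>t. f t + g t)"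
  unfolding poly_fun_def by (metis poly_add)

lemma poly_fun_mult: "poly_fun f \<Longrightarrow> poly_fun g \<Longrightarrow> poly_fun (\<lambda>t. f t * g t)"
  unfolding poly_fun_def by (metis poly_mult)

lemma poly_fun_sum: "(\<And>x. x \<in> S \<Longrightarrow> poly_fun (f x)) \<Longrightarrow> poly_fun (\<lambda>t. \<Sum>x\<in>S. f x t)"
  by (induction S rule: infinite_finite_induct) (auto simp: poly_fun_const poly_fun_add)

lemma poly_fun_finite_zeros:
  fixes h :: "'a::idom \<Rightarrow> 'a"
  assumes "poly_fun h" "h t0 \<noteq> 0"
  shows "finite {t. h t = 0}"
proof -
  obtain q where q: "\<And>t. h t = poly q t" using assms(1) unfolding poly_fun_def by blast
  hence "q \<noteq> 0" using assms(2) by auto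
  thus ?thesis using poly_roots_finite[of q] q by simp
qed

lemma word_eval_poly_fun:
  assumes "\<And>k u v. poly_fun (\<lambda>t. A t k u v)"
  shows "poly_fun (\<lambda>t. word_eval n (A t) w i j)"
proof (induction w arbitrary: i j)
  case Nil
  show ?case by (simp add: word_eval_Nil poly_fun_const)
next
  case (Cons x w)
  show ?case
  proof (cases "i < n \<and> j < n")
    case True
    thus ?thesis unfolding word_eval_Cons mat_mul_def
      by (simp add: poly_fun_sum poly_fun_mult assms Cons.IH)
  next
    case False
    show ?thesis unfolding word_eval_Cons mat_mul_def if_not_P[OF False] by (rule poly_fun_const)
  qed
qed

lemma ncpoly_eval_poly_fun:
  assumes "\<And>k u v. poly_fun (\<lambda>t. A t k u v)"
  shows "poly_fun (\<lambda>t. ncpoly_eval n p (A t) i j)"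
  unfolding ncpoly_eval_def
  by (intro poly_fun_sum poly_fun_mult poly_fun_const word_eval_poly_fun assms)

text \<open>Each entry is a polynomial along the line through two tuples, so it has finitely many
  zeros on that line unless it vanishes at both ends.\<close>

lemma exists_tuple_entries_nonzero:
  fixes p :: "'a::field ncpoly" and E :: "(nat \<times> nat) set"
  assumes inf: "infinite (UNIV :: 'a set)" and "finite E"
    and "\<forall>(i, j)\<in>E. \<exists>c. (\<forall>k<m. c k \<in> upper_tri n) \<and> ncpoly_eval n p c i j \<noteq> 0"
  shows "\<exists>a. (\<forall>k<m. a k \<in> upper_tri n) \<and> (\<forall>(i, j)\<in>E. ncpoly_eval n p a i j \<noteq> 0)"
  using assms(2,3)
proof (induction E rule: finite_induct)
  case empty
  show ?case by (intro exI[of _ "\<lambda>k i j. 0"]) (simp add: upper_tri_def)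
next
  case (insert e E)
  obtain a where a: "\<forall>k<m. a k \<in> upper_tri n" "\<forall>(i, j)\<in>E. ncpoly_eval n p a i j \<noteq> 0"
    using insert.IH insert.prems by blast
  obtain c where c: "\<forall>k<m. c k \<in> upper_tri n" "ncpoly_eval n p c (fst e) (snd e) \<noteq> 0"
    using insert.prems by (cases e) auto
  define L where "L = (\<lambda>t k u v. a k u v + t * (c k u v - a k u v))"
  have L_upper_tri: "\<forall>k<m. L t k \<in> upper_tri n" for t
    using a(1) c(1) by (auto simp: upper_tri_def L_def)
  have L_ends: "L 0 = a" "L 1 = c" by (auto simp: L_def)
  have L_poly: "poly_fun (\<lambda>t. ncpoly_eval n p (L t) i j)" for i j
  proof (rule ncpoly_eval_poly_fun)
    show "poly_fun (\<lambda>t. L t k u v)" for k u v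
      unfolding L_def poly_fun_def by (intro exI[of _ "[:a k u v, c k u v - a k u v:]"]) simp
  qed
  have finite_zeros: "finite {t. ncpoly_eval n p (L t) i j = 0}" if "(i, j) \<in> insert e E" for i j
  proof -
    have "ncpoly_eval n p (L 0) i j \<noteq> 0 \<or> ncpoly_eval n p (L 1) i j \<noteq> 0"
      using that a(2) c(2) unfolding L_ends by auto
    thus ?thesis using poly_fun_finite_zeros[OF L_poly] by blast
  qed
  define Z where "Z = (\<Union>(i, j)\<in>insert e E. {t. ncpoly_eval n p (L t) i j = 0})"
  have "finite Z"
    unfolding Z_def using insert.hyps(1) finite_zeros by (intro finite_UN_I) auto
  then obtain t where "t \<notin> Z" using inf ex_new_if_finite by blast
  hence "\<forall>(i, j)\<in>insert e E. ncpoly_eval n p (L t) i j \<noteq> 0" unfolding Z_def by blast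
  thus ?case using L_upper_tri[of t] by blast
qed

lemma exists_tuple_upper_tri_band:
  fixes p :: "'a::field ncpoly"
  assumes "infinite (UNIV :: 'a set)" and order: "has_order m p r" and vars: "ncpoly_vars_in m p"
  obtains a where "\<forall>k<m. a k \<in> upper_tri n" "ncpoly_eval n p a \<in> upper_tri_band n r"
proof -
  define E where "E = (\<lambda>i. (i, i + r)) ` {..<n - r}"
  have "finite E" unfolding E_def by simp
  moreover have "\<forall>(i, j)\<in>E. \<exists>c. (\<forall>k<m. c k \<in> upper_tri n) \<and> ncpoly_eval n p c i j \<noteq> 0"
  proof (clarify)
    fix i j assume "(i, j) \<in> E"
    hence j: "j = i + r" and "i + r < n" unfolding E_def by auto
    obtain c where "\<forall>k<m. c k \<in> upper_tri n" "ncpoly_eval n p c i (i + r) \<noteq> 0"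
      using ncpoly_eval_superdiag_witness[OF order vars \<open>i + r < n\<close>] by blast
    thus "\<exists>c. (\<forall>k<m. c k \<in> upper_tri n) \<and> ncpoly_eval n p c i j \<noteq> 0"
      unfolding j by blast
  qed
  ultimately obtain a where a: "\<forall>k<m. a k \<in> upper_tri n"
    and nonzero_on_E: "\<forall>(i, j)\<in>E. ncpoly_eval n p a i j \<noteq> 0"
    by (blast dest: exists_tuple_entries_nonzero[OF assms(1)])
  have "ncpoly_eval n p a \<in> upper_tri_band n r"
    using ncpoly_eval_upper_tri[OF vars a] ncpoly_eval_below_superdiag[OF order vars a]
      nonzero_on_E
    by (auto simp: upper_tri_band_def E_def)
  thus thesis using that a by blast
qed

text \<open>The entries of the solution Y of Y g = B, computed column by column.\<close>

function mat_rdiv :: "nat \<Rightarrow> 'a::field sqmat \<Rightarrow> 'a sqmat \<Rightarrow> nat \<Rightarrow> nat \<Rightarrow> 'a" where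
  "mat_rdiv n g B i j = (if n \<le> i \<or> n \<le> j \<or> j < i then 0
     else (B i j - (\<Sum>k\<in>{i..<j}. mat_rdiv n g B i k * g k j)) / g j j)"
  by pat_completeness auto
termination by (relation "measure (\<lambda>(n, g, B, i, j). j)") auto

declare mat_rdiv.simps[simp del]

lemma mat_rdiv_below_diag: "k < i \<Longrightarrow> mat_rdiv n g B i k = 0"
  by (subst mat_rdiv.simps) simp

lemma mat_rdiv_upper_tri: "mat_rdiv n g B \<in> upper_tri n"
  unfolding upper_tri_def by (auto simp: mat_rdiv.simps)

lemma mat_mul_mat_rdiv:
  fixes g :: "'a::field sqmat"
  assumes g: "g \<in> upper_tri n" "\<forall>i<n. g i i \<noteq> 0" and B: "B \<in> upper_tri n"
  shows "mat_mul n (mat_rdiv n g B) g = B"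
proof (intro ext)
  fix i j
  let ?Y = "mat_rdiv n g B"
  show "mat_mul n ?Y g i j = B i j"
  proof (cases "i < n \<and> j < n \<and> i \<le> j")
    case False
    have "?Y i k * g k j = 0" if "j < i" for k
      using that mat_rdiv_below_diag[of k i] upper_triD[OF g(1), of k j] by (cases "k < i") auto
    thus ?thesis using False upper_triD[OF B, of i j]
      by (cases "i < n \<and> j < n") (auto simp: mat_mul_def intro!: sum.neutral)
  next
    case True
    have "(\<Sum>k<n. ?Y i k * g k j) = (\<Sum>k\<in>{i..<Suc j}. ?Y i k * g k j)"
      by (rule sum_lessThan_subset) (use True mat_rdiv_below_diag[of _ i n g B] upper_triD[OF g(1)] in \<open>auto simp: not_le\<close>)
    also have "\<dots> = (\<Sum>k\<in>{i..<j}. ?Y i k * g k j) + ?Y i j * g j j"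
      using True by simp
    also have "?Y i j * g j j = B i j - (\<Sum>k\<in>{i..<j}. ?Y i k * g k j)"
      using True g(2) by (subst mat_rdiv.simps) (simp add: field_simps)
    finally show ?thesis using True by (simp add: mat_mul_def)
  qed
qed

lemma mat_mul_right_cancel:
  fixes g :: "'a::field sqmat"
  assumes g: "g \<in> upper_tri n" "\<forall>i<n. g i i \<noteq> 0"
    and eq: "mat_mul n M g = mat_mul n M' g" and "i < n" "j < n"
  shows "M i j = M' i j"
  using \<open>j < n\<close>
proof (induction j rule: less_induct)
  case (less j)
  have split: "mat_mul n N g i j = (\<Sum>k<j. N i k * g k j) + N i j * g j j" for N
  proof -
    have "(\<Sum>k<n. N i k * g k j) = (\<Sum>k<Suc j. N i k * g k j)"
      by (rule sum_lessThan_subset) (use less.prems upper_triD[OF g(1)] in auto)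
    thus ?thesis using less.prems \<open>i < n\<close> by (simp add: mat_mul_def)
  qed
  have "(\<Sum>k<j. M i k * g k j) = (\<Sum>k<j. M' i k * g k j)"
    by (rule sum.cong) (use less in auto)
  moreover have "mat_mul n M g i j = mat_mul n M' g i j" using eq by simp
  ultimately have "M i j * g j j = M' i j * g j j" unfolding split by simp
  thus ?case using g(2) less.prems by simp
qed

lemma image_on_T_intertwine:
  fixes p :: "'a::field ncpoly"
  assumes vars: "ncpoly_vars_in m p" and a: "\<forall>k<m. a k \<in> upper_tri n"
    and g: "g \<in> upper_tri n" "\<forall>i<n. g i i \<noteq> 0" and B: "B \<in> upper_tri n"
    and eq: "mat_mul n g (ncpoly_eval n p a) = mat_mul n B g"
  shows "B \<in> image_on_T m n p"
proof -
  define a' where "a' = (\<lambda>k. mat_rdiv n g (mat_mul n g (a k)))"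
  have a': "\<forall>k<m. a' k \<in> upper_tri n" by (simp add: a'_def mat_rdiv_upper_tri)
  have "\<forall>k<m. mat_mul n g (a k) = mat_mul n (a' k) g"
    unfolding a'_def using a g by (simp add: mat_mul_mat_rdiv mat_mul_upper_tri)
  hence "mat_mul n (ncpoly_eval n p a') g = mat_mul n B g"
    using ncpoly_eval_intertwine[OF vars] eq by metis
  hence "ncpoly_eval n p a' i j = B i j" for i j
    using mat_mul_right_cancel[OF g] upper_triD[OF B, of i j]
      upper_triD[OF ncpoly_eval_upper_tri[OF vars a'], of i j]
    by (cases "i < n \<and> j < n") auto
  hence "ncpoly_eval n p a' = B" by blast
  thus ?thesis unfolding image_on_T_def using a' by blast
qed

subsection \<open>Intertwining two matrices with the same band shape\<close>

text \<open>A matrix g with g X = A g: the entry (i, l + r) of this equation involves g i l only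
  through the term g i l * X l (l + r), so it can be solved for g i l given the entries of
  g to the left in row i and those in the rows below i + r. The rows l with n \<le> l + r are
  unconstrained and are taken from the identity.\<close>

function intertwiner :: "nat \<Rightarrow> nat \<Rightarrow> 'a::field sqmat \<Rightarrow> 'a sqmat \<Rightarrow> nat \<Rightarrow> nat \<Rightarrow> 'a" where
  "intertwiner n r X A i l = (if n \<le> i \<or> n \<le> l \<or> l < i \<or> r = 0 then 0
     else if n \<le> l + r then (if l = i then 1 else 0)
     else ((\<Sum>k\<in>{i+r..l+r}. A i k * intertwiner n r X A k (l+r))
           - (\<Sum>k\<in>{i..<l}. intertwiner n r X A i k * X k (l+r))) / X l (l+r))"
  by pat_completeness auto
termination
  by (relation "measures [\<lambda>(n, r, X, A, i, l). n - i, \<lambda>(n, r, X, A, i, l). l]") auto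

declare intertwiner.simps[simp del]

lemma intertwiner_outside: "k < i \<or> n \<le> k \<Longrightarrow> intertwiner n r X A i k = 0"
  by (subst intertwiner.simps) auto

lemma intertwiner_upper_tri: "intertwiner n r X A \<in> upper_tri n"
  unfolding upper_tri_def by (auto simp: intertwiner.simps)

lemma intertwiner_diag_nonzero:
  fixes X :: "'a::field sqmat"
  assumes "0 < r" "X \<in> upper_tri_band n r" "A \<in> upper_tri_band n r" "i < n"
  shows "intertwiner n r X A i i \<noteq> 0"
  using \<open>i < n\<close>
proof (induction "n - i" arbitrary: i rule: less_induct)
  case less
  show ?case
  proof (cases "n \<le> i + r")
    case True
    thus ?thesis using less.prems assms(1) by (subst intertwiner.simps) simp
  next
    case False
    have "intertwiner n r X A (i+r) (i+r) \<noteq> 0"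
      using less.hyps[of "i+r"] False assms(1) by simp
    moreover have "intertwiner n r X A i i
        = A i (i+r) * intertwiner n r X A (i+r) (i+r) / X i (i+r)"
      using False less.prems assms(1) by (subst intertwiner.simps) simp
    ultimately show ?thesis using assms(2,3) False by (simp add: upper_tri_band_def)
  qed
qed

lemma mat_mul_intertwiner:
  fixes X :: "'a::field sqmat"
  assumes r: "0 < r" and X: "X \<in> upper_tri_band n r" and A: "A \<in> upper_tri_band n r"
  shows "mat_mul n (intertwiner n r X A) X = mat_mul n A (intertwiner n r X A)"
proof (intro ext)
  fix i j
  let ?g = "intertwiner n r X A"
  have X0: "X k j = 0" if "j < k + r" for k j using X that by (simp add: upper_tri_band_def)
  have A0: "A i k = 0" if "k < i + r" for i k using A that by (simp add: upper_tri_band_def)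
  show "mat_mul n ?g X i j = mat_mul n A ?g i j"
  proof (cases "i < n \<and> j < n")
    case False
    thus ?thesis by (simp add: mat_mul_outside)
  next
    case ij: True
    show ?thesis
    proof (cases "j < i + r")
      case True
      have "?g i k * X k j = 0" for k
        using True intertwiner_outside[of k i n] X0[of j k] by (cases "k < i") auto
      moreover have "A i k * ?g k j = 0" for k
        using True intertwiner_outside[of j k n] A0[of k i] by (cases "k < i + r") auto
      ultimately show ?thesis by (simp add: mat_mul_def sum.neutral)
    next
      case False
      define l where "l = j - r"
      have l: "i \<le> l" "l + r = j" "l < n" using False ij by (auto simp: l_def)
      have "(\<Sum>k<n. ?g i k * X k j) = (\<Sum>k\<in>{i..<Suc l}. ?g i k * X k j)"
        by (rule sum_lessThan_subset)
          (use ij l intertwiner_outside[of _ i n r X A] X0 in \<open>auto simp: not_less_eq not_le\<close>)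
      also have "\<dots> = (\<Sum>k\<in>{i..<l}. ?g i k * X k j) + ?g i l * X l j"
        using l by simp
      also have "?g i l * X l j
          = (\<Sum>k\<in>{i+r..j}. A i k * ?g k j) - (\<Sum>k\<in>{i..<l}. ?g i k * X k j)"
      proof -
        have "X l j \<noteq> 0" using X l ij by (auto simp: upper_tri_band_def)
        thus ?thesis using l ij r by (subst intertwiner.simps) simp
      qed
      also have "(\<Sum>k\<in>{i+r..j}. A i k * ?g k j) = (\<Sum>k<n. A i k * ?g k j)"
        by (rule sum_lessThan_subset[symmetric])
          (use ij l intertwiner_outside[of j _ n] A0 in \<open>auto simp: not_le\<close>)
      finally show ?thesis using ij by (simp add: mat_mul_def)
    qed
  qed
qed

lemma exists_intertwiner:
  fixes X A :: "'a::field sqmat"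
  assumes "0 < r" "X \<in> upper_tri_band n r" "A \<in> upper_tri_band n r"
  obtains g where "g \<in> upper_tri n" "\<forall>i<n. g i i \<noteq> 0" "mat_mul n g X = mat_mul n A g"
  using that intertwiner_upper_tri intertwiner_diag_nonzero[OF assms] mat_mul_intertwiner[OF assms]
  by blast

theorem lemma3p2:
  fixes p :: "'a::field ncpoly" and m n r :: nat and A' :: "'a sqmat"
  assumes "infinite (UNIV :: 'a set)"
    and "m \<ge> 1" and "n \<ge> 2"
    and "ncpoly_vars_in m p"
    and "Poly_Mapping.lookup p [] = 0"
    and "has_order m p r"
    and "1 < r" and "r < n - 1"
    and "A' \<in> upper_tri_strict n (r - 1)"
    and "\<And>s. 1 \<le> s \<Longrightarrow> r + s \<le> n \<Longrightarrow> A' (s - 1) (r + s - 1) \<noteq> 0"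
  shows "A' \<in> image_on_T m n p"
proof -
  obtain a where a: "\<forall>k<m. a k \<in> upper_tri n" and X: "ncpoly_eval n p a \<in> upper_tri_band n r"
    using exists_tuple_upper_tri_band[OF assms(1,6,4)] by blast
  have "A' i (i + r) \<noteq> 0" if "i + r < n" for i
    using assms(10)[of "Suc i"] that by (simp add: add.commute)
  hence A': "A' \<in> upper_tri_band n r"
    using assms(7,9) by (auto simp: upper_tri_band_def upper_tri_strict_def)
  obtain g where "g \<in> upper_tri n" "\<forall>i<n. g i i \<noteq> 0"
    and "mat_mul n g (ncpoly_eval n p a) = mat_mul n A' g"
    using exists_intertwiner[OF _ X A'] assms(7) by auto
  thus ?thesis
    using image_on_T_intertwine[OF assms(4) a] A' by (simp add: upper_tri_band_def)
qed

end
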